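(* Let $I\subset\mathbb{R}$ be an open interval, let $\bm{a}:I\to\mathbb{R}^2_1$ be a spacelike frontal with Gauss mapping $\bm{\nu}:I\to H^1$, and let $r:I\to\mathbb{R}^+$ be a positive constant function. If $\bm{a}$ is not constant (i.e. its image is not a single point), then the pseudo-circle family $C_{(\bm{a}(t),r(t))}$ does not create an envelope.
   Context: All objects are $C^\infty$. The Minkowski plane $\mathbb{R}^2_1$ is $\mathbb{R}^2$ with $\langle\bm{x},\bm{y}\rangle=-x_1y_1+x_2y_2$; $H^1=\{\bm{x}:\langle\bm{x},\bm{x}\rangle=-1\}$. A smooth $\bm{a}:I\to\mathbb{R}^2_1$ is a spacelike frontal if there is a smooth $\bm{\nu}:I\to H^1$ (Gauss mapping) with $\langle\frac{d\bm{a}}{dt}(t),\bm{\nu}(t)\rangle=0$ for all $t$. $C_{(\bm{a}(t),r(t))}=\{\bm{x}\in\mathbb{R}^2_1:\langle\bm{x}-\bm{a}(t),\bm{x}-\bm{a}(t)\rangle=r(t)^2\}$. An envelope of $C_{(\bm{a}(t),r(t))}$ is a smooth $f:I\to\mathbb{R}^2_1$ with $f(t)\in C_{(\bm{a}(t),r(t))}$ and $\langle\frac{df}{dt}(t),f(t)-\bm{a}(t)\rangle=0$ for all $t\in I$. *)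

theory Defs
  imports "HOL-Analysis.Analysis"
begin

definition mink :: "real \<times> real \<Rightarrow> real \<times> real \<Rightarrow> real" where
  "mink x y = - fst x * fst y + snd x * snd y"

definition H1 :: "(real \<times> real) set" where
  "H1 = {x. mink x x = -1}"

definition smooth_on :: "real set \<Rightarrow> (real \<Rightarrow> 'a::real_normed_vector) \<Rightarrow> bool" where
  "smooth_on I f \<longleftrightarrow>
     (\<exists>D :: nat \<Rightarrow> real \<Rightarrow> 'a. D 0 = f \<and>
        (\<forall>n. \<forall>t\<in>I. (D n has_vector_derivative D (Suc n) t) (at t)))"

definition spacelike_frontal ::
  "real set \<Rightarrow> (real \<Rightarrow> real \<times> real) \<Rightarrow> (real \<Rightarrow> real \<times> real) \<Rightarrow> bool" where
  "spacelike_frontal I a \<nu> \<longleftrightarrow>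
     smooth_on I a \<and> smooth_on I \<nu> \<and> (\<forall>t\<in>I. \<nu> t \<in> H1) \<and>
     (\<forall>t\<in>I. mink (vector_derivative a (at t)) (\<nu> t) = 0)"

definition pseudo_circle :: "real \<times> real \<Rightarrow> real \<Rightarrow> (real \<times> real) set" where
  "pseudo_circle c \<rho> = {x. mink (x - c) (x - c) = \<rho>\<^sup>2}"

definition is_envelope ::
  "real set \<Rightarrow> (real \<Rightarrow> real \<times> real) \<Rightarrow> (real \<Rightarrow> real) \<Rightarrow> (real \<Rightarrow> real \<times> real) \<Rightarrow> bool" where
  "is_envelope I a r f \<longleftrightarrow>
     smooth_on I f \<and>
     (\<forall>t\<in>I. f t \<in> pseudo_circle (a t) (r t) \<and>
             mink (vector_derivative f (at t)) (f t - a t) = 0)"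

end

theory Submission
  imports Defs
begin

text \<open>Along an envelope the radius vector \<open>f - a\<close> has constant Minkowski square \<open>r\<^sup>2 > 0\<close>, so
  differentiating it and using the envelope condition shows that \<open>a'\<close> is Minkowski-orthogonal to
  the spacelike vector \<open>f - a\<close>. The frontal condition makes \<open>a'\<close> orthogonal to the timelike vector
  \<open>\<nu>\<close> as well. In the Minkowski plane a nonzero vector has a one-dimensional orthogonal complement,
  which cannot contain both a timelike and a spacelike vector; hence \<open>a' = 0\<close> and \<open>a\<close> is constant
  on the interval \<open>I\<close>.\<close>

lemma mink_diff_left: "mink (x - y) z = mink x z - mink y z"
  by (simp add: mink_def algebra_simps)

lemma has_real_derivative_mink_self:
  assumes "(g has_vector_derivative g') (at t)"
  shows "((\<lambda>s. mink (g s) (g s)) has_real_derivative 2 * mink g' (g t)) (at t)"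
proof -
  have g: "(g has_derivative (\<lambda>h. h *\<^sub>R g')) (at t)"
    using assms by (simp add: has_vector_derivative_def)
  have fst: "((\<lambda>s. fst (g s)) has_real_derivative fst g') (at t)"
    using has_derivative_fst[OF g]
    by (simp add: has_field_derivative_def mult.commute[of _ "fst g'"] fun_eq_iff)
  have snd: "((\<lambda>s. snd (g s)) has_real_derivative snd g') (at t)"
    using has_derivative_snd[OF g]
    by (simp add: has_field_derivative_def mult.commute[of _ "snd g'"] fun_eq_iff)
  show ?thesis unfolding mink_def
    by (rule derivative_eq_intros fst snd | simp)+
qed

lemma mink_self_locally_const_imp_orthogonal:
  assumes "open S" "t \<in> S" "\<And>s. s \<in> S \<Longrightarrow> mink (g s) (g s) = k"
    and "(g has_vector_derivative g') (at t)"
  shows "mink g' (g t) = 0"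
proof -
  obtain d where "d > 0" "ball t d \<subseteq> S"
    using assms(1,2) open_contains_ball by blast
  then have "\<forall>y. \<bar>t - y\<bar> < d \<longrightarrow> mink (g t) (g t) = mink (g y) (g y)"
    using assms(2,3) by (auto simp: dist_real_def)
  then have "2 * mink g' (g t) = 0"
    using DERIV_local_const[OF has_real_derivative_mink_self[OF assms(4)] \<open>d > 0\<close>] by blast
  then show ?thesis by simp
qed

lemma mink_orthogonal_timelike_spacelike_eq_0:
  assumes "mink n n < 0" "mink x x > 0" "mink v n = 0" "mink v x = 0"
  shows "v = 0"
proof (rule ccontr)
  assume "v \<noteq> 0"
  obtain n1 n2 x1 x2 v1 v2 where nxv: "n = (n1, n2)" "x = (x1, x2)" "v = (v1, v2)"
    using prod.exhaust by metis
  then have n: "-n1*n1 + n2*n2 < 0" and x: "-x1*x1 + x2*x2 > 0"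
    and vn: "v1*n1 = v2*n2" and vx: "v1*x1 = v2*x2"
    using assms by (auto simp: mink_def)
  have v: "v1 \<noteq> 0 \<or> v2 \<noteq> 0"
    using \<open>v \<noteq> 0\<close> nxv(3) by (auto simp: prod_eq_iff)
  \<comment> \<open>\<open>n\<close> and \<open>x\<close> both lie on the line orthogonal to \<open>v\<close>, so their determinant vanishes\<close>
  have "v1 * (x1*n2 - x2*n1) = (v1*x1)*n2 - (v1*n1)*x2"
    by (simp add: algebra_simps)
  also have "\<dots> = 0"
    using vn vx by simp
  finally have det1: "v1 * (x1*n2 - x2*n1) = 0" .
  have "v2 * (x1*n2 - x2*n1) = (v2*n2)*x1 - (v2*x2)*n1"
    by (simp add: algebra_simps)
  also have "\<dots> = (v1*n1)*x1 - (v1*x1)*n1"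
    using vn vx by simp
  also have "\<dots> = 0"
    by simp
  finally have det2: "v2 * (x1*n2 - x2*n1) = 0" .
  have det: "x1*n2 - x2*n1 = 0"
    using det1 det2 v by auto
  have "(-x1*x1 + x2*x2) * (-n1*n1 + n2*n2) = (x1*n1 - x2*n2)\<^sup>2 - (x1*n2 - x2*n1)\<^sup>2"
    by (simp add: power2_eq_square algebra_simps)
  with det have "(-x1*x1 + x2*x2) * (-n1*n1 + n2*n2) \<ge> 0"
    by simp
  moreover have "(-x1*x1 + x2*x2) * (-n1*n1 + n2*n2) < 0"
    using mult_pos_neg[OF x n] .
  ultimately show False by linarith
qed

lemma smooth_on_has_vector_derivative:
  assumes "smooth_on I f" "t \<in> I"
  shows "(f has_vector_derivative vector_derivative f (at t)) (at t)"
proof -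
  obtain D where "D 0 = f" "\<forall>n. \<forall>t\<in>I. (D n has_vector_derivative D (Suc n) t) (at t)"
    using assms(1) unfolding smooth_on_def by blast
  then have "f differentiable at t"
    using assms(2) by (metis differentiableI_vector)
  then show ?thesis
    by (rule vector_derivative_works[THEN iffD1])
qed

lemma envelope_center_has_vector_derivative_0:
  assumes "open I" "spacelike_frontal I a \<nu>" "\<And>s. s \<in> I \<Longrightarrow> r s = c" "c \<noteq> 0"
    and "is_envelope I a r f" "t \<in> I"
  shows "(a has_vector_derivative 0) (at t)"
proof -
  let ?a' = "vector_derivative a (at t)" and ?f' = "vector_derivative f (at t)"
  have a': "(a has_vector_derivative ?a') (at t)" and f': "(f has_vector_derivative ?f') (at t)"
    using assms(2,5,6) smooth_on_has_vector_derivative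
    unfolding spacelike_frontal_def is_envelope_def by blast+
  have radius: "mink (f s - a s) (f s - a s) = c\<^sup>2" if "s \<in> I" for s
    using assms(3,5) that unfolding is_envelope_def pseudo_circle_def by auto
  have "mink (?f' - ?a') (f t - a t) = 0"
    using mink_self_locally_const_imp_orthogonal[OF assms(1,6) radius
        has_vector_derivative_diff[OF f' a']] .
  moreover have "mink ?f' (f t - a t) = 0"
    using assms(5,6) unfolding is_envelope_def by blast
  ultimately have "mink ?a' (f t - a t) = 0"
    by (simp add: mink_diff_left)
  moreover have "mink ?a' (\<nu> t) = 0" "mink (\<nu> t) (\<nu> t) < 0"
    using assms(2,6) unfolding spacelike_frontal_def H1_def by auto
  moreover have "mink (f t - a t) (f t - a t) > 0"
    using radius[OF assms(6)] assms(4) by simp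
  ultimately have "?a' = 0"
    using mink_orthogonal_timelike_spacelike_eq_0 by blast
  with a' show ?thesis
    by simp
qed

theorem proposition1:
  fixes I :: "real set" and a \<nu> :: "real \<Rightarrow> real \<times> real" and r :: "real \<Rightarrow> real"
  assumes "open I" and "is_interval I"
    and "spacelike_frontal I a \<nu>"
    and "\<exists>c>0. \<forall>t\<in>I. r t = c"
    and "\<exists>s\<in>I. \<exists>t\<in>I. a s \<noteq> a t"
  shows "\<not> (\<exists>f. is_envelope I a r f)"
proof
  assume "\<exists>f. is_envelope I a r f"
  then obtain f where f: "is_envelope I a r f" by blast
  obtain c where c: "\<And>t. t \<in> I \<Longrightarrow> r t = c" "c \<noteq> 0"
    using assms(4) by force
  have "(a has_vector_derivative 0) (at t within I)" if "t \<in> I" for t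
    using envelope_center_has_vector_derivative_0[OF assms(1,3) c f that]
    by (rule has_vector_derivative_at_within)
  then obtain k where "\<And>t. t \<in> I \<Longrightarrow> a t = k"
    using has_vector_derivative_zero_constant[OF is_interval_convex[OF assms(2)]] by blast
  then show False using assms(5) by auto
qed

end
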